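(* Let $(X,d)$ be a metric space with a distinguished point $o$, $p>0$, $\mathcal{F}$ a $p$-admissible sheaf of metrics on $X$, and $\rho_+:\mathbf{R}_+\to\mathbf{R}_+$ an increasing unbounded function. Let $\mathcal{A}$ be the set of finite subsets of $X$ containing $o$. Assume there is a function $T:\mathbf{R}_+\to\mathbf{R}_+$ such that for every $U\in\mathcal{A}$ and every $K>0$ there exists $\sigma\in\mathcal{F}(U)$ with $\sigma(x,y)\le\rho_+(d(x,y))$ for all $x,y\in U$ and $\sigma(x,y)\ge K$ for all $(x,y)\in\Delta_{T(K)}(U)$. Then $\mathcal{F}(X)$ contains a coarse metric.
   Context: A (pseudo-)metric on a set $\Omega$ is a function $\sigma:\Omega^2\to\mathbf{R}_+$ with $\sigma(x,y)=\sigma(y,x)$, $\sigma(x,y)\le\sigma(x,z)+\sigma(z,y)$, $\sigma(x,x)=0$. A sheaf of metrics $\mathcal{F}$ on a set $X$ assigns to each $\Omega\subseteq X$ a set $\mathcal{F}(\Omega)$ of metrics on $\Omega$, such that the restriction of any element of $\mathcal{F}(\Omega)$ to $\Omega'\subseteq\Omega$ belongs to $\mathcal{F}(\Omega')$. For $p>0$, $\mathcal{F}$ is $p$-admissible if for every $\Omega\subseteq X$: (i) $\{\sigma^p:\sigma\in\mathcal{F}(\Omega)\}$ is a convex cone of functions on $\Omega^2$ (for $\sigma_1,\sigma_2\in\mathcal{F}(\Omega)$ and $s,t\ge0$ there is $\sigma\in\mathcal{F}(\Omega)$ with $\sigma^p=s\sigma_1^p+t\sigma_2^p$); (ii) $\mathcal{F}(\Omega)$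 is closed under pointwise convergence; (iii) for every family $(U_i)$ of finite subsets of $\Omega$ with union $\Omega$, directed under inclusion, and every family $\sigma_i\in\mathcal{F}(U_i)$ with $\sigma_i=\sigma_j$ on $U_i\cap U_j$, there is $\sigma\in\mathcal{F}(\Omega)$ restricting to $\sigma_i$ on each $U_i$. A metric $\sigma$ on $X$ is coarse if there exist increasing unbounded $\rho_-,\rho_+':\mathbf{R}_+\to\mathbf{R}_+$ with $\rho_-(d(x,y))\le\sigma(x,y)\le\rho_+'(d(x,y))$ for all $x,y$. $\Delta_r(U)=\{(x,y)\in U^2:d(x,y)\ge r\}$. *)

theory Defs
  imports "HOL-Analysis.Analysis"
begin

text \<open>Metrics on a subset \<open>\<Omega>\<close> are represented by functions on the whole type;
  only their values on \<open>\<Omega> \<times> \<Omega>\<close> matter.\<close>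

definition pmetric_on :: "'a set \<Rightarrow> ('a \<Rightarrow> 'a \<Rightarrow> real) \<Rightarrow> bool" where
  "pmetric_on \<Omega> \<sigma> \<longleftrightarrow>
     (\<forall>x\<in>\<Omega>. \<forall>y\<in>\<Omega>. 0 \<le> \<sigma> x y) \<and>
     (\<forall>x\<in>\<Omega>. \<forall>y\<in>\<Omega>. \<sigma> x y = \<sigma> y x) \<and>
     (\<forall>x\<in>\<Omega>. \<forall>y\<in>\<Omega>. \<forall>z\<in>\<Omega>. \<sigma> x y \<le> \<sigma> x z + \<sigma> z y) \<and>
     (\<forall>x\<in>\<Omega>. \<sigma> x x = 0)"

definition in_sheaf :: "('a set \<Rightarrow> ('a \<Rightarrow> 'a \<Rightarrow> real) set) \<Rightarrow> 'a set \<Rightarrow> ('a \<Rightarrow> 'a \<Rightarrow> real) \<Rightarrow> bool" where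
  "in_sheaf F \<Omega> \<sigma> \<longleftrightarrow> (\<exists>\<tau>\<in>F \<Omega>. \<forall>x\<in>\<Omega>. \<forall>y\<in>\<Omega>. \<tau> x y = \<sigma> x y)"

definition sheaf_of_metrics :: "'a set \<Rightarrow> ('a set \<Rightarrow> ('a \<Rightarrow> 'a \<Rightarrow> real) set) \<Rightarrow> bool" where
  "sheaf_of_metrics X F \<longleftrightarrow>
     (\<forall>\<Omega>. \<Omega> \<subseteq> X \<longrightarrow> (\<forall>\<sigma>\<in>F \<Omega>. pmetric_on \<Omega> \<sigma>)) \<and>
     (\<forall>\<Omega> \<Omega>'. \<Omega> \<subseteq> X \<longrightarrow> \<Omega>' \<subseteq> \<Omega> \<longrightarrow> (\<forall>\<sigma>\<in>F \<Omega>. in_sheaf F \<Omega>' \<sigma>))"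

definition p_admissible :: "real \<Rightarrow> 'a set \<Rightarrow> ('a set \<Rightarrow> ('a \<Rightarrow> 'a \<Rightarrow> real) set) \<Rightarrow> bool" where
  "p_admissible p X F \<longleftrightarrow> sheaf_of_metrics X F \<and>
     (\<forall>\<Omega>. \<Omega> \<subseteq> X \<longrightarrow>
       \<comment> \<open>(i) the p-th powers form a convex cone\<close>
       (\<forall>\<sigma>1\<in>F \<Omega>. \<forall>\<sigma>2\<in>F \<Omega>. \<forall>s t::real. s \<ge> 0 \<longrightarrow> t \<ge> 0 \<longrightarrow>
          (\<exists>\<sigma>\<in>F \<Omega>. \<forall>x\<in>\<Omega>. \<forall>y\<in>\<Omega>.
             \<sigma> x y powr p = s * \<sigma>1 x y powr p + t * \<sigma>2 x y powr p)) \<and>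
       \<comment> \<open>(ii) closed under pointwise convergence\<close>
       (\<forall>(S :: nat \<Rightarrow> 'a \<Rightarrow> 'a \<Rightarrow> real) \<sigma>. (\<forall>n. S n \<in> F \<Omega>) \<longrightarrow>
          (\<forall>x\<in>\<Omega>. \<forall>y\<in>\<Omega>. (\<lambda>n. S n x y) \<longlonglongrightarrow> \<sigma> x y) \<longrightarrow> in_sheaf F \<Omega> \<sigma>) \<and>
       \<comment> \<open>(iii) gluing along directed families of finite subsets\<close>
       (\<forall>(\<U> :: 'a set set) (S :: 'a set \<Rightarrow> 'a \<Rightarrow> 'a \<Rightarrow> real).
          \<U> \<noteq> {} \<longrightarrow> (\<forall>U\<in>\<U>. finite U) \<longrightarrow> \<Union>\<U> = \<Omega> \<longrightarrow>
          (\<forall>U\<in>\<U>. \<forall>V\<in>\<U>. \<exists>W\<in>\<U>. U \<union> V \<subseteq> W) \<longrightarrow>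
          (\<forall>U\<in>\<U>. S U \<in> F U) \<longrightarrow>
          (\<forall>U\<in>\<U>. \<forall>V\<in>\<U>. \<forall>x\<in>U \<inter> V. \<forall>y\<in>U \<inter> V. S U x y = S V x y) \<longrightarrow>
          (\<exists>\<sigma>\<in>F \<Omega>. \<forall>U\<in>\<U>. \<forall>x\<in>U. \<forall>y\<in>U. \<sigma> x y = S U x y)))"

definition incr_unbounded :: "(real \<Rightarrow> real) \<Rightarrow> bool" where
  "incr_unbounded f \<longleftrightarrow> mono_on {0..} f \<and> (\<forall>t\<ge>0. 0 \<le> f t) \<and> (\<forall>M. \<exists>t\<ge>0. M < f t)"

definition coarse_metric :: "'a set \<Rightarrow> ('a \<Rightarrow> 'a \<Rightarrow> real) \<Rightarrow> ('a \<Rightarrow> 'a \<Rightarrow> real) \<Rightarrow> bool" where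
  "coarse_metric X d \<sigma> \<longleftrightarrow>
     (\<exists>\<rho>m \<rho>p. incr_unbounded \<rho>m \<and> incr_unbounded \<rho>p \<and>
        (\<forall>x\<in>X. \<forall>y\<in>X. \<rho>m (d x y) \<le> \<sigma> x y \<and> \<sigma> x y \<le> \<rho>p (d x y)))"

end

theory Submission
  imports Defs
begin

(*
  The proof has a finite and an infinite stage.

  Finite stage.  Fix the thresholds K_n = 2^((n+1)/p).  On a finite set U the hypothesis
  provides metrics sigma_n in F(U) bounded above by rho_+(d) and at least K_n on pairs at
  distance >= T(K_n).  By the cone axiom (i) the metric phi with
  phi^p = sum_{n<=N} 2^-(n+1) sigma_n^p lies in F(U).  It is still bounded by rho_+(d), and
  on a pair at distance t every index n <= t with T(K_n) <= t contributes at least 1 to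
  phi^p.  Hence rho_-(t) = (number of such indices)^(1/p), an increasing unbounded
  function not depending on U, satisfies rho_-(d) <= phi <= rho_+(d) on U.

  Infinite stage (local-to-global).  Two-sided bounds realised by members of F(U) for
  every finite U are realised by a member of F(X): the candidates are points of a
  compact (Tychonoff) product of intervals indexed by pairs, the condition "is in F(U)
  on U" is closed by the limit axiom (ii), so some function satisfies it for all finite
  U simultaneously, and it lies in F(X) by the gluing axiom (iii).
*)

lemma admissible_nonneg:
  assumes "p_admissible p X F" "U \<subseteq> X" "\<sigma> \<in> F U" "x \<in> U" "y \<in> U"
  shows "0 \<le> \<sigma> x y"
proof -
  have "pmetric_on U \<sigma>"
    using assms(1-3) unfolding p_admissible_def sheaf_of_metrics_def by blast
  then show ?thesis using assms(4,5) unfolding pmetric_on_def by blast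
qed

lemma admissible_restrict:
  assumes "p_admissible p X F" "V \<subseteq> X" "U \<subseteq> V" "in_sheaf F V h"
  shows "in_sheaf F U h"
proof -
  obtain \<sigma> where \<sigma>: "\<sigma> \<in> F V" "\<forall>x\<in>V. \<forall>y\<in>V. \<sigma> x y = h x y"
    using assms(4) unfolding in_sheaf_def by blast
  have "sheaf_of_metrics X F" using assms(1) unfolding p_admissible_def by blast
  then have "in_sheaf F U \<sigma>"
    using assms(2,3) \<sigma>(1) unfolding sheaf_of_metrics_def by blast
  then show ?thesis
    using \<sigma>(2) assms(3) unfolding in_sheaf_def by (metis subsetD)
qed

lemma admissible_bounds_restrict:
  assumes adm: "p_admissible p X F" and "V \<subseteq> X" "U \<subseteq> V"
    and "\<sigma> \<in> F V" "\<forall>x\<in>V. \<forall>y\<in>V. lo x y \<le> \<sigma> x y \<and> \<sigma> x y \<le> hi x y"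
  shows "\<exists>\<tau>\<in>F U. \<forall>x\<in>U. \<forall>y\<in>U. lo x y \<le> \<tau> x y \<and> \<tau> x y \<le> hi x y"
proof -
  have "in_sheaf F V \<sigma>"
    unfolding in_sheaf_def using assms(4) by blast
  then have "in_sheaf F U \<sigma>"
    by (rule admissible_restrict[OF adm assms(2,3)])
  then obtain \<tau> where \<tau>: "\<tau> \<in> F U" "\<forall>x\<in>U. \<forall>y\<in>U. \<tau> x y = \<sigma> x y"
    unfolding in_sheaf_def by blast
  show ?thesis
  proof (rule bexI[OF _ \<tau>(1)], intro ballI)
    fix x y assume xy: "x \<in> U" "y \<in> U"
    then have "x \<in> V" "y \<in> V"
      using assms(3) by auto
    then show "lo x y \<le> \<tau> x y \<and> \<tau> x y \<le> hi x y"
      using assms(5) \<tau>(2) xy by simp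
  qed
qed

lemma admissible_local:
  assumes "p_admissible p X F" "\<Omega> \<subseteq> X"
  shows "(\<forall>\<sigma>1\<in>F \<Omega>. \<forall>\<sigma>2\<in>F \<Omega>. \<forall>s t::real. s \<ge> 0 \<longrightarrow> t \<ge> 0 \<longrightarrow>
          (\<exists>\<sigma>\<in>F \<Omega>. \<forall>x\<in>\<Omega>. \<forall>y\<in>\<Omega>.
             \<sigma> x y powr p = s * \<sigma>1 x y powr p + t * \<sigma>2 x y powr p)) \<and>
       (\<forall>(S :: nat \<Rightarrow> 'a \<Rightarrow> 'a \<Rightarrow> real) \<sigma>. (\<forall>n. S n \<in> F \<Omega>) \<longrightarrow>
          (\<forall>x\<in>\<Omega>. \<forall>y\<in>\<Omega>. (\<lambda>n. S n x y) \<longlonglongrightarrow> \<sigma> x y) \<longrightarrow> in_sheaf F \<Omega> \<sigma>) \<and>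
       (\<forall>(\<U> :: 'a set set) (S :: 'a set \<Rightarrow> 'a \<Rightarrow> 'a \<Rightarrow> real).
          \<U> \<noteq> {} \<longrightarrow> (\<forall>U\<in>\<U>. finite U) \<longrightarrow> \<Union>\<U> = \<Omega> \<longrightarrow>
          (\<forall>U\<in>\<U>. \<forall>V\<in>\<U>. \<exists>W\<in>\<U>. U \<union> V \<subseteq> W) \<longrightarrow>
          (\<forall>U\<in>\<U>. S U \<in> F U) \<longrightarrow>
          (\<forall>U\<in>\<U>. \<forall>V\<in>\<U>. \<forall>x\<in>U \<inter> V. \<forall>y\<in>U \<inter> V. S U x y = S V x y) \<longrightarrow>
          (\<exists>\<sigma>\<in>F \<Omega>. \<forall>U\<in>\<U>. \<forall>x\<in>U. \<forall>y\<in>U. \<sigma> x y = S U x y))"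
  using mp[OF spec[OF conjunct2[OF assms(1)[unfolded p_admissible_def]], of \<Omega>] assms(2)] .

lemma admissible_cone:
  assumes "p_admissible p X F" "U \<subseteq> X" "\<sigma>1 \<in> F U" "\<sigma>2 \<in> F U" "s \<ge> 0" "t \<ge> 0"
  shows "\<exists>\<sigma>\<in>F U. \<forall>x\<in>U. \<forall>y\<in>U. \<sigma> x y powr p = s * \<sigma>1 x y powr p + t * \<sigma>2 x y powr p"
  using conjunct1[OF admissible_local[OF assms(1,2)], rule_format, OF assms(3-6)] .

lemma admissible_limit:
  assumes "p_admissible p X F" "U \<subseteq> X" "\<And>n. S n \<in> F U"
    and "\<And>x y. x \<in> U \<Longrightarrow> y \<in> U \<Longrightarrow> (\<lambda>n. S n x y) \<longlonglongrightarrow> h x y"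
  shows "in_sheaf F U h"
  using conjunct1[OF conjunct2[OF admissible_local[OF assms(1,2)]], rule_format, of S h]
    assms(3,4) by blast

lemma admissible_glue:
  assumes "p_admissible p X F" "\<U> \<noteq> {}" "\<And>U. U \<in> \<U> \<Longrightarrow> finite U" "\<Union>\<U> = X"
    and "\<And>U V. U \<in> \<U> \<Longrightarrow> V \<in> \<U> \<Longrightarrow> \<exists>W\<in>\<U>. U \<union> V \<subseteq> W"
    and "\<And>U. U \<in> \<U> \<Longrightarrow> S U \<in> F U"
    and "\<And>U V x y. U \<in> \<U> \<Longrightarrow> V \<in> \<U> \<Longrightarrow> x \<in> U \<inter> V \<Longrightarrow> y \<in> U \<inter> V \<Longrightarrow> S U x y = S V x y"
  shows "\<exists>\<sigma>\<in>F X. \<forall>U\<in>\<U>. \<forall>x\<in>U. \<forall>y\<in>U. \<sigma> x y = S U x y"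
  using conjunct2[OF conjunct2[OF admissible_local[OF assms(1) order.refl]], rule_format, OF assms(2-7)] .

section \<open>From finite subsets to the whole space\<close>

text \<open>The finite subsets of \<open>X\<close> form a directed cover, so (iii) applies.\<close>
lemma in_sheaf_of_finite:
  assumes adm: "p_admissible p X F" and fin: "\<And>U. finite U \<Longrightarrow> U \<subseteq> X \<Longrightarrow> in_sheaf F U h"
  shows "in_sheaf F X h"
proof -
  define \<U> where "\<U> = {U. finite U \<and> U \<subseteq> X}"
  have "\<forall>U\<in>\<U>. \<exists>\<sigma>. \<sigma> \<in> F U \<and> (\<forall>x\<in>U. \<forall>y\<in>U. \<sigma> x y = h x y)"
    using fin unfolding \<U>_def in_sheaf_def by blast
  then obtain S where S: "\<forall>U\<in>\<U>. S U \<in> F U \<and> (\<forall>x\<in>U. \<forall>y\<in>U. S U x y = h x y)"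
    by (rule bchoice[THEN exE])
  have cover: "\<Union>\<U> = X"
  proof
    show "X \<subseteq> \<Union>\<U>"
    proof
      fix x assume "x \<in> X"
      then have "{x} \<in> \<U>" unfolding \<U>_def by simp
      then show "x \<in> \<Union>\<U>" by blast
    qed
  qed (auto simp: \<U>_def)
  have directed: "\<exists>W\<in>\<U>. U \<union> V \<subseteq> W" if "U \<in> \<U>" "V \<in> \<U>" for U V
    using that unfolding \<U>_def by blast
  have nonempty: "\<U> \<noteq> {}"
    unfolding \<U>_def by blast
  have finite_members: "finite U" if "U \<in> \<U>" for U
    using that unfolding \<U>_def by blast
  have S_in: "S U \<in> F U" if "U \<in> \<U>" for U
    using S that by blast
  have compatible: "S U x y = S V x y"
    if "U \<in> \<U>" "V \<in> \<U>" "x \<in> U \<inter> V" "y \<in> U \<inter> V" for U V x y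
    using S that by simp
  obtain \<sigma> where \<sigma>: "\<sigma> \<in> F X" "\<forall>U\<in>\<U>. \<forall>x\<in>U. \<forall>y\<in>U. \<sigma> x y = S U x y"
    using admissible_glue[OF adm nonempty finite_members cover directed S_in compatible] by blast
  have "\<sigma> x y = h x y" if "x \<in> X" "y \<in> X" for x y
  proof -
    have "{x, y} \<in> \<U>" using that unfolding \<U>_def by simp
    then show ?thesis using \<sigma>(2) S by simp
  qed
  then show ?thesis
    using \<sigma>(1) unfolding in_sheaf_def by blast
qed

text \<open>For finite \<open>U \<subseteq> X\<close>, "being in \<open>F(U)\<close> on \<open>U\<close>" is a closed condition on functions of
  pairs in the product topology: a point of the closure is a pointwise limit on the
  finitely many pairs of \<open>U\<close>, so (ii) applies.\<close>
lemma closed_in_sheaf: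
  assumes adm: "p_admissible p X F" and U: "U \<subseteq> X" "finite U"
  shows "closed {h :: 'a \<times> 'a \<Rightarrow> real. in_sheaf F U (curry h)}"
    (is "closed ?C")
proof -
  have "\<tau> \<in> ?C" if \<tau>: "\<tau> \<in> closure ?C" for \<tau>
  proof -
    have "\<exists>\<sigma>\<in>F U. \<forall>x\<in>U. \<forall>y\<in>U. dist (\<sigma> x y) (\<tau> (x, y)) < inverse (Suc n)" for n
    proof -
      define B where "B = {h :: 'a \<times> 'a \<Rightarrow> real. \<forall>i\<in>U \<times> U. h i \<in> ball (\<tau> i) (inverse (Suc n))}"
      have "open B"
        unfolding B_def using product_topology_basis'[of "U \<times> U" "\<lambda>i. ball (\<tau> i) (inverse (Suc n))" id] U(2)
        by simp
      moreover have "\<tau> \<in> B"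
        unfolding B_def by simp
      ultimately have "?C \<inter> B \<noteq> {}"
        using closure_iff_nhds_not_empty[THEN iffD1, rule_format, OF \<tau> order_refl] by blast
      then obtain h where "h \<in> ?C" "h \<in> B" by blast
      then obtain \<sigma> where \<sigma>: "\<sigma> \<in> F U" "\<forall>x\<in>U. \<forall>y\<in>U. \<sigma> x y = h (x, y)"
        "\<forall>x\<in>U. \<forall>y\<in>U. dist (h (x, y)) (\<tau> (x, y)) < inverse (Suc n)"
        unfolding in_sheaf_def B_def by (auto simp: dist_commute)
      show ?thesis
      proof (rule bexI[OF _ \<sigma>(1)], intro ballI)
        fix x y assume "x \<in> U" "y \<in> U"
        then show "dist (\<sigma> x y) (\<tau> (x, y)) < inverse (Suc n)"
          using \<sigma>(2,3) by simp
      qed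
    qed
    then have "\<forall>n. \<exists>\<sigma>. \<sigma> \<in> F U \<and> (\<forall>x\<in>U. \<forall>y\<in>U. dist (\<sigma> x y) (\<tau> (x, y)) < inverse (Suc n))"
      by blast
    then obtain S where S: "\<forall>n. S n \<in> F U \<and> (\<forall>x\<in>U. \<forall>y\<in>U. dist (S n x y) (\<tau> (x, y)) < inverse (Suc n))"
      by (rule choice[THEN exE])
    have conv: "(\<lambda>n. S n x y) \<longlonglongrightarrow> curry \<tau> x y" if "x \<in> U" "y \<in> U" for x y
    proof -
      have "(\<lambda>n. S n x y - \<tau> (x, y)) \<longlonglongrightarrow> 0"
        by (rule Lim_null_comparison[OF _ LIMSEQ_inverse_real_of_nat])
          (use S that in \<open>auto simp: dist_real_def intro!: always_eventually less_imp_le\<close>)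
      then show ?thesis
        by (simp add: LIM_zero_cancel)
    qed
    have "in_sheaf F U (curry \<tau>)"
      by (rule admissible_limit[OF adm U(1)]) (use S conv in auto)
    then show "\<tau> \<in> ?C" by simp
  qed
  then show ?thesis
    by (subst closure_subset_eq[symmetric]) blast
qed

text \<open>The candidates on
  finite sets are points of a product of compact intervals indexed by pairs; by
  Tychonoff and closedness of the sheaf condition one function satisfies it on
  every finite set, and it then belongs to \<open>F(X)\<close> by finite character.\<close>
lemma admissible_bounds_local_to_global:
  assumes adm: "p_admissible p X F"
    and local: "\<And>U. finite U \<Longrightarrow> U \<subseteq> X \<Longrightarrow>
                  \<exists>\<sigma>\<in>F U. \<forall>x\<in>U. \<forall>y\<in>U. lo x y \<le> \<sigma> x y \<and> \<sigma> x y \<le> hi x y"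
  shows "\<exists>\<sigma>\<in>F X. \<forall>x\<in>X. \<forall>y\<in>X. lo x y \<le> \<sigma> x y \<and> \<sigma> x y \<le> hi x y"
proof -
  define l :: "'a \<times> 'a \<Rightarrow> real" where "l i = (if i \<in> X \<times> X then lo (fst i) (snd i) else 0)" for i
  define u :: "'a \<times> 'a \<Rightarrow> real" where "u i = (if i \<in> X \<times> X then hi (fst i) (snd i) else 0)" for i
  define Box where "Box = PiE UNIV (\<lambda>i. {l i..u i})"
  define C where "C U = {h :: 'a \<times> 'a \<Rightarrow> real. in_sheaf F U (curry h)}" for U
  define \<U> where "\<U> = {U. finite U \<and> U \<subseteq> X}"
  have in_Box: "h \<in> Box \<longleftrightarrow> (\<forall>i. l i \<le> h i \<and> h i \<le> u i)" for h
    unfolding Box_def by (simp add: PiE_iff)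
  have l_le_u: "l i \<le> u i" for i
  proof (cases "i \<in> X \<times> X")
    case True
    then obtain x y where i: "i = (x, y)" "x \<in> X" "y \<in> X" by auto
    then obtain \<sigma> where "\<forall>a\<in>{x, y}. \<forall>b\<in>{x, y}. lo a b \<le> \<sigma> a b \<and> \<sigma> a b \<le> hi a b"
      using local[of "{x, y}"] by auto
    then have "lo x y \<le> \<sigma> x y" "\<sigma> x y \<le> hi x y" by simp_all
    then show ?thesis
      using i by (simp add: l_def u_def)
  qed (simp add: l_def u_def)
  have "compact Box"
  proof -
    have "compactin (product_topology (\<lambda>i. euclidean) UNIV) Box"
      unfolding Box_def by (simp add: compactin_PiE)
    then show ?thesis by (simp add: euclidean_product_topology)
  qed
  have "Box \<inter> (\<Inter>U\<in>\<U>. C U) \<noteq> {}"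
  proof (rule compact_imp_fip_image[OF \<open>compact Box\<close>])
    show "closed (C U)" if "U \<in> \<U>" for U
      using closed_in_sheaf[OF adm, of U] that unfolding C_def \<U>_def by simp
    fix \<J> assume \<J>: "finite \<J>" "\<J> \<subseteq> \<U>"
    define W where "W = \<Union>\<J>"
    have W: "finite W" "W \<subseteq> X"
      using \<J> unfolding W_def \<U>_def by auto
    obtain \<sigma> where \<sigma>: "\<sigma> \<in> F W" "\<forall>x\<in>W. \<forall>y\<in>W. lo x y \<le> \<sigma> x y \<and> \<sigma> x y \<le> hi x y"
      using local[OF W] by blast
    define g where "g i = (if i \<in> W \<times> W then \<sigma> (fst i) (snd i) else l i)" for i
    have "l i \<le> g i \<and> g i \<le> u i" for i
    proof (cases "i \<in> W \<times> W")
      case True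
      then show ?thesis
        using \<sigma>(2) W(2) by (auto simp: g_def l_def u_def)
    qed (use l_le_u in \<open>simp add: g_def\<close>)
    then have "g \<in> Box"
      unfolding in_Box by blast
    moreover have "g \<in> C U" if "U \<in> \<J>" for U
    proof -
      have "in_sheaf F W (curry g)"
        unfolding in_sheaf_def g_def using \<sigma>(1) by auto
      then show ?thesis
        using admissible_restrict[OF adm W(2)] that unfolding C_def W_def by blast
    qed
    ultimately show "Box \<inter> (\<Inter>U\<in>\<J>. C U) \<noteq> {}" by blast
  qed
  then obtain \<tau> where \<tau>: "\<tau> \<in> Box" "\<And>U. U \<in> \<U> \<Longrightarrow> in_sheaf F U (curry \<tau>)"
    unfolding C_def by blast
  have "in_sheaf F X (curry \<tau>)"
    using in_sheaf_of_finite[OF adm] \<tau>(2) unfolding \<U>_def by blast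
  then obtain \<sigma> where \<sigma>: "\<sigma> \<in> F X" "\<forall>x\<in>X. \<forall>y\<in>X. \<sigma> x y = \<tau> (x, y)"
    unfolding in_sheaf_def by auto
  have "lo x y \<le> \<sigma> x y \<and> \<sigma> x y \<le> hi x y" if "x \<in> X" "y \<in> X" for x y
  proof -
    have "l (x, y) \<le> \<tau> (x, y) \<and> \<tau> (x, y) \<le> u (x, y)"
      using \<tau>(1) unfolding in_Box by blast
    then show ?thesis
      using \<sigma>(2) that by (simp add: l_def u_def)
  qed
  then show ?thesis
    using \<sigma>(1) by blast
qed

section \<open>The finite stage\<close>

text \<open>The thresholds \<open>K\<^sub>n = 2\<^bsup>(n+1)/p\<^esup>\<close>, chosen so that \<open>K\<^sub>n\<^sup>p = 2\<^bsup>n+1\<^esup>\<close> exactly compensates the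
  weight \<open>2\<^bsup>-(n+1)\<^esup>\<close> given to the \<open>n\<close>-th metric.\<close>
definition threshold :: "real \<Rightarrow> nat \<Rightarrow> real" where
  "threshold p n = 2 powr ((real n + 1) / p)"

definition weight :: "nat \<Rightarrow> real" where
  "weight n = (1 / 2) ^ Suc n"

definition reached :: "(real \<Rightarrow> real) \<Rightarrow> real \<Rightarrow> real \<Rightarrow> nat set" where
  "reached T p t = {n. n \<le> nat \<lfloor>t\<rfloor> \<and> T (threshold p n) \<le> t}"

definition lower_gauge :: "(real \<Rightarrow> real) \<Rightarrow> real \<Rightarrow> real \<Rightarrow> real" where
  "lower_gauge T p t = real (card (reached T p t)) powr (1 / p)"

lemma threshold_pos: "0 < threshold p n"
  by (simp add: threshold_def)

lemma weight_threshold: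
  assumes "0 < p"
  shows "weight n * threshold p n powr p = 1"
proof -
  have "threshold p n powr p = 2 powr (real n + 1)"
    using assms by (simp add: threshold_def powr_powr)
  also have "\<dots> = 2 ^ Suc n"
    by (metis of_nat_Suc add.commute powr_realpow zero_less_numeral)
  finally show ?thesis
    by (simp add: weight_def power_one_over)
qed

lemma weight_sum_le_1: "(\<Sum>n\<le>N. weight n) \<le> 1"
proof -
  have "(\<Sum>n\<le>N. weight n) = 1 - (1 / 2) ^ Suc N"
    by (induction N) (auto simp: weight_def power_Suc)
  then show ?thesis by simp
qed

lemma finite_reached: "finite (reached T p t)"
  by (rule finite_subset[of _ "{..nat \<lfloor>t\<rfloor>}"]) (auto simp: reached_def)

lemma reached_mono: "s \<le> t \<Longrightarrow> reached T p s \<subseteq> reached T p t"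
  by (auto simp: reached_def intro: order_trans nat_mono floor_mono)

lemma reached_initial_segment: "\<exists>t\<ge>0. {..n} \<subseteq> reached T p t"
proof (intro exI conjI)
  define t where "t = max (real n) (Max ((\<lambda>k. T (threshold p k)) ` {..n}))"
  show "0 \<le> t"
    by (simp add: t_def)
  show "{..n} \<subseteq> reached T p t"
  proof
    fix k assume k: "k \<in> {..n}"
    have "n \<le> nat \<lfloor>t\<rfloor>"
      by (simp add: t_def le_nat_floor)
    moreover have "T (threshold p k) \<le> t"
      unfolding t_def using k by (intro max.coboundedI2 Max_ge) auto
    ultimately show "k \<in> reached T p t"
      using k by (auto simp: reached_def)
  qed
qed

lemma lower_gauge_incr_unbounded:
  assumes "0 < p"
  shows "incr_unbounded (lower_gauge T p)"
  unfolding incr_unbounded_def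
proof (intro conjI allI impI)
  show "mono_on {0..} (lower_gauge T p)"
  proof (rule mono_onI)
    fix s t :: real assume "s \<le> t"
    then have "card (reached T p s) \<le> card (reached T p t)"
      by (intro card_mono finite_reached reached_mono)
    then show "lower_gauge T p s \<le> lower_gauge T p t"
      unfolding lower_gauge_def using assms by (intro powr_mono2) auto
  qed
  show "0 \<le> lower_gauge T p t" for t
    unfolding lower_gauge_def by (rule powr_ge_zero)
  fix M :: real
  define c where "c = max 1 M"
  obtain t where t: "0 \<le> t" "{..nat \<lceil>c powr p\<rceil>} \<subseteq> reached T p t"
    using reached_initial_segment by blast
  then have "card {..nat \<lceil>c powr p\<rceil>} \<le> card (reached T p t)"
    by (intro card_mono finite_reached)
  then have "c powr p < real (card (reached T p t))"
    by simp linarith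
  then have "(c powr p) powr (1 / p) < lower_gauge T p t"
    unfolding lower_gauge_def using assms by (intro powr_less_mono2) auto
  moreover have "(c powr p) powr (1 / p) = c"
    using assms by (simp add: powr_powr c_def)
  ultimately have "M < lower_gauge T p t"
    unfolding c_def by linarith
  then show "\<exists>t\<ge>0. M < lower_gauge T p t"
    using t(1) by blast
qed


lemma admissible_cone_sum:
  fixes \<sigma> :: "nat \<Rightarrow> 'a \<Rightarrow> 'a \<Rightarrow> real" and w :: "nat \<Rightarrow> real" and N :: nat
  assumes adm: "p_admissible p X F" and U: "U \<subseteq> X"
    and \<sigma>: "\<And>n. \<sigma> n \<in> F U" and w: "\<And>n. 0 \<le> w n"
  shows "\<exists>\<phi>\<in>F U. \<forall>x\<in>U. \<forall>y\<in>U. \<phi> x y powr p = (\<Sum>n\<le>N. w n * \<sigma> n x y powr p)"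
proof (induction N)
  case 0
  then show ?case
    using admissible_cone[OF adm U \<sigma> \<sigma> w order_refl, of 0 0] by simp
next
  case (Suc N)
  then obtain \<phi> where \<phi>: "\<phi> \<in> F U"
    "\<forall>x\<in>U. \<forall>y\<in>U. \<phi> x y powr p = (\<Sum>n\<le>N. w n * \<sigma> n x y powr p)"
    by blast
  then show ?case
    using admissible_cone[OF adm U \<phi>(1) \<sigma> zero_le_one w, of "Suc N"] by simp
qed

lemma powr_le_imp_le_base:
  assumes "0 < p" "0 \<le> (b::real)" "a powr p \<le> b powr p"
  shows "a \<le> b"
  using powr_less_mono2[OF assms(1,2), of a] assms(3) by linarith

text \<open>Upper estimate: the weights sum to at most 1, so the combination stays below any
  common upper bound of the combined values.\<close>
lemma weighted_powr_sum_upper: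
  assumes "0 < p" "\<And>n. 0 \<le> s n" "\<And>n. s n \<le> r"
  shows "(\<Sum>n\<le>N. weight n * s n powr p) \<le> r powr p"
proof -
  have "(\<Sum>n\<le>N. weight n * s n powr p) \<le> (\<Sum>n\<le>N. weight n * r powr p)"
    using assms by (intro sum_mono mult_left_mono powr_mono2) (auto simp: weight_def)
  also have "\<dots> = (\<Sum>n\<le>N. weight n) * r powr p"
    by (simp add: sum_distrib_right)
  also have "\<dots> \<le> r powr p"
    using weight_sum_le_1[of N] by (intro mult_left_le_one_le) (auto simp: weight_def intro: sum_nonneg)
  finally show ?thesis .
qed

text \<open>Lower estimate: every reached index whose value is at least its threshold
  contributes at least 1 to the combination.\<close>
lemma weighted_powr_sum_lower:
  assumes "0 < p" "reached T p t \<subseteq> {..N}" "\<And>n. 0 \<le> s n"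
    and "\<And>n. n \<in> reached T p t \<Longrightarrow> threshold p n \<le> s n"
  shows "real (card (reached T p t)) \<le> (\<Sum>n\<le>N. weight n * s n powr p)"
proof -
  have "real (card (reached T p t)) = (\<Sum>n\<in>reached T p t. weight n * threshold p n powr p)"
    using weight_threshold[OF assms(1)] by simp
  also have "\<dots> \<le> (\<Sum>n\<in>reached T p t. weight n * s n powr p)"
    using assms(1,4) threshold_pos
    by (intro sum_mono mult_left_mono powr_mono2) (auto simp: weight_def less_imp_le)
  also have "\<dots> \<le> (\<Sum>n\<le>N. weight n * s n powr p)"
    using assms(2,3) by (intro sum_mono2) (auto simp: weight_def)
  finally show ?thesis .
qed

lemma admissible_finite_stage:
  assumes adm: "p_admissible p X F" and p: "0 < p" and U: "finite U" "U \<subseteq> X"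
    and hyp: "\<forall>K>0. \<exists>\<sigma>\<in>F U. (\<forall>x\<in>U. \<forall>y\<in>U. \<sigma> x y \<le> hi x y) \<and>
                            (\<forall>x\<in>U. \<forall>y\<in>U. d x y \<ge> T K \<longrightarrow> \<sigma> x y \<ge> K)"
  shows "\<exists>\<phi>\<in>F U. \<forall>x\<in>U. \<forall>y\<in>U. lower_gauge T p (d x y) \<le> \<phi> x y \<and> \<phi> x y \<le> hi x y"
proof -
  have "\<forall>n. \<exists>\<sigma>. \<sigma> \<in> F U \<and> (\<forall>x\<in>U. \<forall>y\<in>U. \<sigma> x y \<le> hi x y) \<and>
          (\<forall>x\<in>U. \<forall>y\<in>U. d x y \<ge> T (threshold p n) \<longrightarrow> \<sigma> x y \<ge> threshold p n)"
    using hyp[rule_format, OF threshold_pos] by blast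
  then obtain \<sigma> where \<sigma>: "\<forall>n. \<sigma> n \<in> F U \<and> (\<forall>x\<in>U. \<forall>y\<in>U. \<sigma> n x y \<le> hi x y) \<and>
          (\<forall>x\<in>U. \<forall>y\<in>U. d x y \<ge> T (threshold p n) \<longrightarrow> \<sigma> n x y \<ge> threshold p n)"
    by (rule choice[THEN exE])
  define N where "N = nat \<lfloor>Max ((\<lambda>(x, y). d x y) ` (U \<times> U))\<rfloor>"
  obtain \<phi> where \<phi>: "\<phi> \<in> F U"
    "\<forall>x\<in>U. \<forall>y\<in>U. \<phi> x y powr p = (\<Sum>n\<le>N. weight n * \<sigma> n x y powr p)"
    using admissible_cone_sum[OF adm U(2), of \<sigma> weight N] \<sigma> by (auto simp: weight_def)
  show ?thesis
  proof (rule bexI[OF _ \<phi>(1)], intro ballI conjI)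
    fix x y assume x: "x \<in> U" and y: "y \<in> U"
    have \<sigma>_nonneg: "0 \<le> \<sigma> n x y" for n
      using admissible_nonneg[OF adm U(2) _ x y] \<sigma> by blast
    have \<phi>_nonneg: "0 \<le> \<phi> x y"
      using admissible_nonneg[OF adm U(2) \<phi>(1) x y] .
    have hi_nonneg: "0 \<le> hi x y"
      using \<sigma>_nonneg[of 0] \<sigma> x y by (meson order_trans)
    have "\<phi> x y powr p \<le> hi x y powr p"
      using weighted_powr_sum_upper[where s = "\<lambda>n. \<sigma> n x y" and r = "hi x y" and N = N, OF p \<sigma>_nonneg] \<phi>(2) \<sigma> x y by simp
    then show "\<phi> x y \<le> hi x y"
      using powr_le_imp_le_base[OF p hi_nonneg] by blast
    have "d x y \<le> Max ((\<lambda>(x, y). d x y) ` (U \<times> U))"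
      using x y U(1) by (intro Max_ge) (auto intro!: image_eqI[of _ _ "(x, y)"])
    then have "reached T p (d x y) \<subseteq> {..N}"
      unfolding reached_def N_def by (auto intro: order_trans nat_mono floor_mono)
    then have "real (card (reached T p (d x y))) \<le> (\<Sum>n\<le>N. weight n * \<sigma> n x y powr p)"
      by (rule weighted_powr_sum_lower[where s = "\<lambda>n. \<sigma> n x y", OF p _ \<sigma>_nonneg])
        (use \<sigma> x y in \<open>auto simp: reached_def\<close>)
    then have "real (card (reached T p (d x y))) \<le> \<phi> x y powr p"
      using \<phi>(2) x y by simp
    then have "lower_gauge T p (d x y) \<le> (\<phi> x y powr p) powr (1 / p)"
      unfolding lower_gauge_def using p by (intro powr_mono2) auto
    also have "\<dots> = \<phi> x y"
      using p \<phi>_nonneg by (simp add: powr_powr)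
    finally show "lower_gauge T p (d x y) \<le> \<phi> x y" .
  qed
qed


theorem mainTheorem7:
  fixes X :: "'a set" and d :: "'a \<Rightarrow> 'a \<Rightarrow> real" and x0 :: 'a and p :: real
    and F :: "'a set \<Rightarrow> ('a \<Rightarrow> 'a \<Rightarrow> real) set"
    and \<rho>p :: "real \<Rightarrow> real" and T :: "real \<Rightarrow> real"
  assumes "Metric_space X d"
    and "x0 \<in> X"
    and "p > 0"
    and "p_admissible p X F"
    and "incr_unbounded \<rho>p"
    and "\<forall>K\<ge>0. T K \<ge> 0"
    and "\<forall>U. finite U \<and> U \<subseteq> X \<and> x0 \<in> U \<longrightarrow>
           (\<forall>K>0. \<exists>\<sigma>\<in>F U. (\<forall>x\<in>U. \<forall>y\<in>U. \<sigma> x y \<le> \<rho>p (d x y)) \<and>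
                            (\<forall>x\<in>U. \<forall>y\<in>U. d x y \<ge> T K \<longrightarrow> \<sigma> x y \<ge> K))"
  shows "\<exists>\<sigma>\<in>F X. coarse_metric X d \<sigma>"
proof -
  note adm = assms(4) and p = assms(3)
  text \<open>Finite stage on every finite \<open>U \<subseteq> X\<close>: apply it to \<open>U \<union> {x\<^sub>0}\<close> and restrict.\<close>
  have finite_bounds: "\<exists>\<sigma>\<in>F U. \<forall>x\<in>U. \<forall>y\<in>U. lower_gauge T p (d x y) \<le> \<sigma> x y \<and> \<sigma> x y \<le> \<rho>p (d x y)"
    if U: "finite U" "U \<subseteq> X" for U
  proof -
    have V: "finite (insert x0 U)" "insert x0 U \<subseteq> X"
      using U assms(2) by auto
    then have "finite (insert x0 U) \<and> insert x0 U \<subseteq> X \<and> x0 \<in> insert x0 U"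
      by simp
    note hyp = mp[OF spec[OF assms(7), of "insert x0 U"] this]
    obtain \<phi> where "\<phi> \<in> F (insert x0 U)" "\<forall>x\<in>insert x0 U. \<forall>y\<in>insert x0 U.
        lower_gauge T p (d x y) \<le> \<phi> x y \<and> \<phi> x y \<le> \<rho>p (d x y)"
      using admissible_finite_stage[where hi = "\<lambda>x y. \<rho>p (d x y)" and d = d and T = T,
          OF adm p V hyp] by blast
    then show ?thesis
      by (rule admissible_bounds_restrict[where lo = "\<lambda>x y. lower_gauge T p (d x y)"
            and hi = "\<lambda>x y. \<rho>p (d x y)", OF adm V(2) subset_insertI])
  qed
  obtain \<sigma> where \<sigma>: "\<sigma> \<in> F X"
    "\<forall>x\<in>X. \<forall>y\<in>X. lower_gauge T p (d x y) \<le> \<sigma> x y \<and> \<sigma> x y \<le> \<rho>p (d x y)"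
    using admissible_bounds_local_to_global[OF adm finite_bounds] by blast
  have "coarse_metric X d \<sigma>"
    unfolding coarse_metric_def
  proof (intro exI conjI ballI)
    show "incr_unbounded (lower_gauge T p)"
      by (rule lower_gauge_incr_unbounded[OF p])
    show "incr_unbounded \<rho>p"
      by (rule assms(5))
    fix x y assume "x \<in> X" "y \<in> X"
    then show "lower_gauge T p (d x y) \<le> \<sigma> x y" "\<sigma> x y \<le> \<rho>p (d x y)"
      using \<sigma>(2) by simp_all
  qed
  then show ?thesis
    using \<sigma>(1) by blast
qed

end
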